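(* Let $n\ge 2$ and let $P=(x+1)(x^{n-1}+c_1x^{n-2}+\cdots+c_{n-1})$ be a real polynomial, and let $a_1,\dots,a_{n-1}\in\mathbb C$ be the numbers (unique up to permutation) with $P=K_{a_1}*\cdots*K_{a_{n-1}}$, where $K_a=(x+1)^{n-1}(x+a)$. For $j=1,\dots,n-1$ put $b_j=-j/(n-j)$. (1) If $P$ has exactly $m\ge 0$ positive roots counted with multiplicity and a root of multiplicity exactly $k\ge 0$ at $0$, then among the numbers $a_i$ there are at least $m+\max(0,k-1)$ pairwise distinct negative real numbers, $\max(0,k-1)$ of which are $b_1,\dots,b_{k-1}$ (i.e. each of $b_1,\dots,b_{k-1}$ occurs among the $a_i$); moreover, if $k\ge 1$, then one of the numbers $a_i$ equals $0$. (2) If exactly $q$ of the numbers $a_i$ equal $0$ and exactly $q_1$ of them are positive real numbers, then $P$ has at least $q_1+\max(0,q-1)$ negative roots counted with multiplicity; and if $q\ge 1$, then $P(0)=0$.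
   Context: Schur–Szegő composition of degree-$n$ polynomials: for $A=\sum_{j=0}^n\binom{n}{j}\alpha_jx^j$ and $B=\sum_{j=0}^n\binom{n}{j}\beta_jx^j$ one sets $A*B=\sum_{j=0}^n\binom{n}{j}\alpha_j\beta_jx^j$; this is commutative and associative, and for several polynomials $A_1*\cdots*A_s$ the coefficient of $\binom nj x^j$ is the product of the corresponding coefficients. All polynomials here are composed as degree-$n$ polynomials. It is known (and used as the definition of the $a_i$) that every polynomial of the form $(x+1)(x^{n-1}+c_1x^{n-2}+\cdots+c_{n-1})$ can be written as $K_{a_1}*\cdots*K_{a_{n-1}}$ with $K_a=(x+1)^{n-1}(x+a)$, the complex numbers $a_i$ being unique up to permutation; equivalently, since $K_a=\sum_{j=0}^n\binom nj\frac{(n-j)a+j}{n}x^j$, writing $P=\sum_j\binom nj p_jx^j$ one has $p_j=\prod_{i=1}^{n-1}\frac{(n-j)a_i+j}{n}$ for all $j$. For real $P$ the non-real $a_i$ come in complex conjugate pairs. *)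

theory Defs
  imports "HOL-Computational_Algebra.Polynomial" Complex_Main
begin

text \<open>Schur-Szego composition of two polynomials, both regarded as degree-n polynomials:
  if A = sum_j (n choose j) alpha_j x^j and B = sum_j (n choose j) beta_j x^j then
  A * B = sum_j (n choose j) alpha_j beta_j x^j, i.e. the j-th coefficient is
  coeff A j * coeff B j / (n choose j).\<close>
definition schur_szego :: "nat \<Rightarrow> complex poly \<Rightarrow> complex poly \<Rightarrow> complex poly" where
  "schur_szego n A B =
     Poly (map (\<lambda>j. coeff A j * coeff B j / of_nat (n choose j)) [0..<Suc n])"

definition K_poly :: "nat \<Rightarrow> complex \<Rightarrow> complex poly" where
  "K_poly n a = [:1, 1:] ^ (n - 1) * [:a, 1:]"

text \<open>Schur-Szego composition K_{a_1} * ... * K_{a_s} (degree-n composition).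
  The neutral element of the composition is (x+1)^n.\<close>
definition schur_szego_K :: "nat \<Rightarrow> complex list \<Rightarrow> complex poly" where
  "schur_szego_K n as = foldr (\<lambda>a acc. schur_szego n (K_poly n a) acc) as ([:1, 1:] ^ n)"

end

theory Submission
  imports Defs
begin

text \<open>
  Write \<open>P = \<Sum>\<^sub>j (n choose j) p\<^sub>j x\<^sup>j\<close>. Then \<open>p\<^sub>j = \<phi>(j)\<close> for the polynomial
  \<open>\<phi>(t) = \<Prod>\<^sub>i ((n - t) a\<^sub>i + t) / n\<close>, which is real because it has degree \<open>< n + 1\<close> and is real at
  \<open>t = 0, \<dots>, n\<close>; in particular \<open>P(0) = \<Prod>\<^sub>i a\<^sub>i\<close>. A root \<open>t \<in> (0, n)\<close> of \<open>\<phi>\<close> means that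
  \<open>-t / (n - t)\<close>, a negative number depending injectively on \<open>t\<close>, is one of the \<open>a\<^sub>i\<close>.

  (1) If \<open>0\<close> is a root of multiplicity \<open>k\<close>, then \<open>\<phi>\<close> vanishes at \<open>0, \<dots>, k - 1\<close>, giving \<open>b\<^sub>1, \<dots>, b\<^sub>k\<^sub>-\<^sub>1\<close>.
  By Descartes' rule the \<open>m\<close> positive roots are bounded by the sign changes of \<open>p\<^sub>k, \<dots>, p\<^sub>n\<close>, and
  each of them forces a further root of \<open>\<phi>\<close> in \<open>(k, n)\<close>.

  (2) Composition with \<open>K\<^sub>a\<close> is the operator \<open>a + (1 - a)/n \<cdot> x d/dx\<close>. For real \<open>a > 0\<close> it is a
  multiple of \<open>x d/dx - t\<close> with \<open>t < 0\<close> or \<open>t > n\<close>, and by Rolle's theorem applied to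
  \<open>|x|\<^sup>-\<^sup>t u(x)\<close> it loses no negative root; for \<open>a = 0\<close> it loses at most one, and none once \<open>u(0) = 0\<close>.
  Composing \<open>(x + 1)\<^sup>n\<close> first with the \<open>K\<^sub>a\<close> for the other \<open>a\<^sub>i\<close> leaves the root \<open>-1\<close> with
  multiplicity at least \<open>1 + q + q\<^sub>1\<close>.
\<close>

section \<open>Descartes' rule of signs\<close>

fun first_nonzero :: "real list \<Rightarrow> real" where
  "first_nonzero [] = 0"
| "first_nonzero (x # xs) = (if x \<noteq> 0 then x else first_nonzero xs)"

fun sign_changes :: "real list \<Rightarrow> nat" where
  "sign_changes [] = 0"
| "sign_changes (x # xs) = sign_changes xs + (if x * first_nonzero xs < 0 then 1 else 0)"

definition coeff_sign_changes :: "real poly \<Rightarrow> nat" where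
  "coeff_sign_changes p = sign_changes (coeffs p)"

definition pos_roots :: "real poly \<Rightarrow> nat" where
  "pos_roots p = (\<Sum>r\<in>{r. r > 0 \<and> poly p r = 0}. order r p)"

definition neg_roots :: "real poly \<Rightarrow> nat" where
  "neg_roots p = (\<Sum>r\<in>{r. r < 0 \<and> poly p r = 0}. order r p)"

lemma first_nonzero_eq_0_iff: "first_nonzero xs = 0 \<longleftrightarrow> (\<forall>x\<in>set xs. x = 0)"
  by (induction xs) auto

lemma sign_changes_zeros: "first_nonzero xs = 0 \<Longrightarrow> sign_changes xs = 0"
  by (induction xs) (auto split: if_splits)

lemma first_nonzero_append_zeros: "first_nonzero zs = 0 \<Longrightarrow> first_nonzero (xs @ zs) = first_nonzero xs"
  by (induction xs) auto

lemma sign_changes_append_zeros: "first_nonzero zs = 0 \<Longrightarrow> sign_changes (xs @ zs) = sign_changes xs"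
  by (induction xs) (auto simp: first_nonzero_append_zeros sign_changes_zeros)

lemma sign_changes_zeros_append: "\<forall>x\<in>set zs. x = 0 \<Longrightarrow> sign_changes (zs @ ys) = sign_changes ys"
  by (induction zs) auto

lemma sign_changes_strip_while: "sign_changes (strip_while ((=) 0) xs) = sign_changes xs"
proof (induction xs rule: rev_induct)
  case (snoc x xs)
  then show ?case using sign_changes_append_zeros[of "[x]" xs] by auto
qed simp

lemma coeff_sign_changes_Poly: "coeff_sign_changes (Poly xs) = sign_changes xs"
  by (simp add: coeff_sign_changes_def sign_changes_strip_while)

lemma sign_changes_cong_sgn:
  assumes "\<forall>j\<in>set js. sgn (f j) = sgn (g j)"
  shows "sign_changes (map f js) = sign_changes (map g js)
    \<and> sgn (first_nonzero (map f js)) = sgn (first_nonzero (map g js))"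
  using assms
proof (induction js)
  case (Cons j js)
  then have IH: "sign_changes (map f js) = sign_changes (map g js)"
      "sgn (first_nonzero (map f js)) = sgn (first_nonzero (map g js))"
    and fg: "sgn (f j) = sgn (g j)" by auto
  have neg_iff: "x * y < 0 \<longleftrightarrow> sgn x * sgn y < 0" for x y :: real
    by (metis sgn_less sgn_mult)
  have "f j * first_nonzero (map f js) < 0 \<longleftrightarrow> g j * first_nonzero (map g js) < 0"
    using fg IH(2) neg_iff by metis
  moreover have "f j = 0 \<longleftrightarrow> g j = 0" using fg by (metis sgn_0_0)
  ultimately show ?case using IH fg by simp
qed simp

fun lin_factor_coeffs :: "real \<Rightarrow> real \<Rightarrow> real list \<Rightarrow> real list" where
  "lin_factor_coeffs r c [] = [c]"
| "lin_factor_coeffs r c (g # gs) = (c - r * g) # lin_factor_coeffs r g gs"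

lemma Poly_lin_factor_coeffs: "Poly (lin_factor_coeffs r c gs) = [:c:] + [:-r, 1:] * Poly gs"
  by (induction gs arbitrary: c) (simp_all add: algebra_simps)

lemma first_nonzero_lin_factor_coeffs_zeros:
  "first_nonzero gs = 0 \<Longrightarrow> first_nonzero (lin_factor_coeffs r c gs) = c"
  by (induction gs arbitrary: c) (auto split: if_splits)

lemma first_nonzero_lin_factor_coeffs_nonzero:
  "first_nonzero gs \<noteq> 0 \<Longrightarrow> first_nonzero (lin_factor_coeffs r c gs) \<noteq> 0"
proof (induction gs arbitrary: c)
  case (Cons g gs)
  then show ?case
    using first_nonzero_lin_factor_coeffs_zeros[of gs r g] by (cases "first_nonzero gs = 0") auto
qed simp

lemma first_nonzero_lin_factor_coeffs_sign:
  assumes "c * first_nonzero gs \<le> 0" "first_nonzero gs \<noteq> 0" "r > 0"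
  shows "first_nonzero (lin_factor_coeffs r c gs) * first_nonzero gs < 0"
  using assms
proof (induction gs arbitrary: c)
  case (Cons g gs)
  show ?case
  proof (cases "g = 0")
    case False
    have "c * g \<le> 0" using Cons.prems False by simp
    moreover have "r * (g * g) > 0" using Cons.prems(3) False by (metis mult_pos_pos not_real_square_gt_zero)
    ultimately have "(c - r * g) * g < 0" by (simp add: algebra_simps)
    then show ?thesis using False by auto
  next
    case True
    then show ?thesis using Cons by (cases "c = 0") (auto simp: order_less_le)
  qed
qed simp

lemma mult_neg_neg_imp_pos: "x * y < 0 \<Longrightarrow> z * y < 0 \<Longrightarrow> x * z > (0::real)"
  by (auto simp: mult_less_0_iff zero_less_mult_iff)

lemma mult_neg_pos_imp_neg: "x * y < 0 \<Longrightarrow> z * y > 0 \<Longrightarrow> x * z < (0::real)"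
  by (auto simp: mult_less_0_iff zero_less_mult_iff)

lemma sign_changes_lin_factor_coeffs:
  assumes "first_nonzero gs \<noteq> 0" "r > 0"
  shows "sign_changes (lin_factor_coeffs r c gs)
    \<ge> sign_changes gs + (if first_nonzero (lin_factor_coeffs r c gs) * first_nonzero gs < 0 then 1 else 0)"
  using assms
proof (induction gs arbitrary: c)
  case (Cons g gs)
  let ?H = "lin_factor_coeffs r g gs"
  let ?d = "c - r * g"
  show ?case
  proof (cases "first_nonzero gs = 0")
    case True
    then show ?thesis
      using Cons.prems sign_changes_zeros first_nonzero_lin_factor_coeffs_zeros[OF True] by auto
  next
    case False
    have IH: "sign_changes ?H \<ge> sign_changes gs + (if first_nonzero ?H * first_nonzero gs < 0 then 1 else 0)"
      using Cons.IH[OF False Cons.prems(2)] .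
    have H: "first_nonzero ?H \<noteq> 0" using first_nonzero_lin_factor_coeffs_nonzero[OF False] .
    have flip: "first_nonzero ?H * first_nonzero gs < 0" if "g * first_nonzero gs \<le> 0"
      using first_nonzero_lin_factor_coeffs_sign[OF that False Cons.prems(2)] .
    consider "g = 0" | "g * first_nonzero gs < 0" | "g * first_nonzero gs > 0"
      using False by (metis linorder_neqE_linordered_idom mult_eq_0_iff)
    then show ?thesis
    proof cases
      case 1
      then show ?thesis using IH flip by auto
    next
      case 2
      have "first_nonzero ?H * first_nonzero gs < 0" using flip 2 by simp
      then have "first_nonzero ?H * g > 0" using 2 mult_neg_neg_imp_pos by blast
      then have "?d * g < 0 \<Longrightarrow> ?d * first_nonzero ?H < 0" using mult_neg_pos_imp_neg by blast
      then show ?thesis using IH 2 \<open>first_nonzero ?H * first_nonzero gs < 0\<close>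
        \<open>first_nonzero ?H * g > 0\<close> by (cases "?d = 0") auto
    next
      case 3
      have "first_nonzero ?H * g < 0 \<Longrightarrow> first_nonzero ?H * first_nonzero gs < 0"
        using 3 by (metis mult.commute mult_neg_pos_imp_neg)
      moreover have "?d * g < 0 \<Longrightarrow> first_nonzero ?H * g > 0 \<Longrightarrow> ?d * first_nonzero ?H < 0"
        using mult_neg_pos_imp_neg by blast
      moreover have "first_nonzero ?H * g < 0 \<or> first_nonzero ?H * g > 0"
        using H 3 by (metis linorder_neqE_linordered_idom mult_eq_0_iff)
      ultimately show ?thesis using IH 3 by (cases "?d = 0") auto
    qed
  qed
qed simp

lemma coeff_sign_changes_mult_lin:
  assumes "g \<noteq> 0" "r > 0"
  shows "coeff_sign_changes ([:-r, 1:] * g) \<ge> coeff_sign_changes g + 1"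
proof -
  have eq: "[:-r, 1:] * g = Poly (lin_factor_coeffs r 0 (coeffs g))" by (simp add: Poly_lin_factor_coeffs)
  have "lead_coeff g \<in> set (coeffs g)"
    using assms(1) by (metis last_coeffs_eq_coeff_degree last_in_set coeffs_eq_Nil)
  then have nz: "first_nonzero (coeffs g) \<noteq> 0"
    using assms(1) first_nonzero_eq_0_iff[of "coeffs g"] by auto
  have "first_nonzero (lin_factor_coeffs r 0 (coeffs g)) * first_nonzero (coeffs g) < 0"
    using first_nonzero_lin_factor_coeffs_sign[of 0 "coeffs g" r] nz assms(2) by simp
  then show ?thesis
    using sign_changes_lin_factor_coeffs[OF nz assms(2), of 0]
    unfolding eq coeff_sign_changes_Poly by (simp add: coeff_sign_changes_def)
qed

lemma order_lin: "order x [:-r, 1:] = (if x = r then 1 else 0)" for r x :: real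
  using order_power_n_n[of r 1] by (auto simp: order_0I)

lemma pos_roots_mult_lin:
  assumes "g \<noteq> 0" "r > 0"
  shows "pos_roots ([:-r, 1:] * g) = pos_roots g + 1"
proof -
  let ?R = "{x::real. x > 0 \<and> poly g x = 0}"
  have nz: "[:-r, 1:] * g \<noteq> 0" using assms(1) by (metis mult_eq_0_iff pCons_eq_0_iff zero_neq_one)
  have ord: "order x ([:-r, 1:] * g) = (if x = r then 1 else 0) + order x g" for x
    using order_mult[OF nz] order_lin by simp
  have fin: "finite ?R"
    using poly_roots_finite[OF assms(1)] by (rule rev_finite_subset) auto
  have roots: "{x. x > 0 \<and> poly ([:-r, 1:] * g) x = 0} = insert r ?R"
    using assms by auto
  have "(\<Sum>x\<in>insert r ?R. order x g) = pos_roots g"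
    using fin by (cases "poly g r = 0") (auto simp: pos_roots_def insert_absorb order_0I assms(2))
  moreover have "(\<Sum>x\<in>insert r ?R. if x = r then 1 else 0) = (1::nat)"
    using fin by (simp add: sum.delta)
  ultimately show ?thesis
    unfolding pos_roots_def roots ord sum.distrib by simp
qed

theorem descartes_rule_of_signs: "p \<noteq> 0 \<Longrightarrow> pos_roots p \<le> coeff_sign_changes p"
proof (induction "degree p" arbitrary: p rule: less_induct)
  case (less p)
  show ?case
  proof (cases "\<exists>r>0. poly p r = 0")
    case False
    then have "{r. r > 0 \<and> poly p r = 0} = {}" by auto
    then show ?thesis unfolding pos_roots_def by (metis sum.empty zero_le)
  next
    case True
    then obtain r g where r: "r > 0" and g: "p = [:-r, 1:] * g"
      by (metis dvdE poly_eq_0_iff_dvd)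
    have "g \<noteq> 0" using less.prems g by auto
    then have "degree p = degree [:-r, 1:] + degree g"
      unfolding g by (intro degree_mult_eq) auto
    then have "degree p = degree g + 1" by simp
    then have "pos_roots g \<le> coeff_sign_changes g" using less.hyps \<open>g \<noteq> 0\<close> by simp
    then show ?thesis
      using g pos_roots_mult_lin[OF \<open>g \<noteq> 0\<close> r] coeff_sign_changes_mult_lin[OF \<open>g \<noteq> 0\<close> r] by simp
  qed
qed

section \<open>Sign changes of sampled functions\<close>

lemma sign_change_imp_root:
  fixes \<phi> :: "real \<Rightarrow> real"
  assumes "continuous_on {a..b} \<phi>" "a \<le> b" "\<phi> a * \<phi> b < 0"
  shows "\<exists>t. a < t \<and> t < b \<and> \<phi> t = 0"
proof -
  obtain t where t: "a \<le> t" "t \<le> b" "\<phi> t = 0"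
  proof (cases "\<phi> a < 0")
    case True
    then have "\<phi> b > 0" using assms(3) by (auto simp: mult_less_0_iff)
    then show ?thesis using IVT'[of \<phi> a 0 b] True assms(1,2) that by auto
  next
    case False
    then have "\<phi> a > 0" "\<phi> b < 0" using assms(3) by (auto simp: mult_less_0_iff)
    then show ?thesis using IVT2'[of \<phi> b 0 a] assms(1,2) that by auto
  qed
  moreover have "t \<noteq> a" "t \<noteq> b" using t(3) assms(3) by auto
  ultimately show ?thesis by (intro exI[of _ t]) auto
qed

text \<open>Each sign change of the samples \<open>\<phi> K, \<dots>, \<phi> n\<close>, and a zero at \<open>K\<close>, yields its own root
  of \<open>\<phi>\<close> in a unit interval \<open>[j, j + 1)\<close>.\<close>

lemma sign_changes_samples_le_card_roots:
  fixes \<phi> :: "real \<Rightarrow> real" and n K :: nat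
  assumes cont: "continuous_on UNIV \<phi>" and fin: "finite {t. \<phi> t = 0}"
    and "K \<le> n" and "\<phi> (real n) \<noteq> 0"
  shows "sign_changes (map (\<lambda>j. \<phi> (real j)) [K..<Suc n]) + (if \<phi> (real K) = 0 then 1 else 0)
          \<le> card {t. real K \<le> t \<and> t < real n \<and> \<phi> t = 0}"
  using \<open>K \<le> n\<close>
proof (induction K rule: inc_induct)
  case base
  then show ?case using \<open>\<phi> (real n) \<noteq> 0\<close> by simp
next
  case (step K)
  define rest where "rest = map (\<lambda>j. \<phi> (real j)) [Suc K..<Suc n]"
  define I where "I = {t. real K \<le> t \<and> t < real (Suc K) \<and> \<phi> t = 0}"
  define C where "C = card {t. real (Suc K) \<le> t \<and> t < real n \<and> \<phi> t = 0}"
  have samples: "map (\<lambda>j. \<phi> (real j)) [K..<Suc n] = \<phi> (real K) # rest"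
    unfolding rest_def using step.hyps by (simp add: upt_conv_Cons)
  have first: "\<phi> (real (Suc K)) \<noteq> 0 \<Longrightarrow> first_nonzero rest = \<phi> (real (Suc K))"
    unfolding rest_def using step.hyps by (simp del: upt_Suc add: upt_conv_Cons)
  have split: "{t. real K \<le> t \<and> t < real n \<and> \<phi> t = 0} =
      I \<union> {t. real (Suc K) \<le> t \<and> t < real n \<and> \<phi> t = 0}"
    unfolding I_def using step.hyps by auto
  have "finite I" "finite {t. real (Suc K) \<le> t \<and> t < real n \<and> \<phi> t = 0}"
    unfolding I_def by (auto intro: finite_subset[OF _ fin])
  moreover have "I \<inter> {t. real (Suc K) \<le> t \<and> t < real n \<and> \<phi> t = 0} = {}"
    unfolding I_def by auto
  ultimately have card_split: "card {t. real K \<le> t \<and> t < real n \<and> \<phi> t = 0} = card I + C"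
    unfolding C_def split by (rule card_Un_disjoint)
  have I_nonempty: "card I \<ge> 1" if "\<phi> (real K) = 0 \<or> \<phi> (real K) * \<phi> (real (Suc K)) < 0"
  proof -
    have "continuous_on {real K..real (Suc K)} \<phi>" using cont by (rule continuous_on_subset) auto
    then have "\<exists>t. real K \<le> t \<and> t < real (Suc K) \<and> \<phi> t = 0"
      using that sign_change_imp_root[of "real K" "real (Suc K)" \<phi>]
      by (metis less_eq_real_def lessI of_nat_less_iff order_refl)
    then show ?thesis using \<open>finite I\<close> unfolding I_def
      by (metis (mono_tags, lifting) One_nat_def Suc_leI card_gt_0_iff empty_iff mem_Collect_eq)
  qed
  have IH: "sign_changes rest + (if \<phi> (real (Suc K)) = 0 then 1 else 0) \<le> C"
    using step.IH unfolding rest_def C_def .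
  show ?case
    using IH I_nonempty first unfolding samples card_split
    by (cases "\<phi> (real (Suc K)) = 0") (auto simp: not_less)
qed

section \<open>Composition with \<open>K\<^sub>a\<close> as a differential operator\<close>

text \<open>Composing with \<open>K\<^sub>a\<close> multiplies the normalised coefficient \<open>p\<^sub>j\<close> by
  \<open>K_weight n a j = ((n - j) a + j) / n\<close>, i.e. it is the differential operator
  \<open>a + (1 - a)/n \<cdot> x d/dx\<close>.\<close>

definition K_weight :: "nat \<Rightarrow> 'a::field \<Rightarrow> 'a \<Rightarrow> 'a" where
  "K_weight n a t = a + (1 - a) * t / of_nat n"

definition euler_op :: "'a::idom poly \<Rightarrow> 'a poly" where
  "euler_op p = pCons 0 (pderiv p)"

definition K_op :: "nat \<Rightarrow> 'a::field \<Rightarrow> 'a poly \<Rightarrow> 'a poly" where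
  "K_op n a p = smult a p + smult ((1 - a) / of_nat n) (euler_op p)"

fun K_ops :: "nat \<Rightarrow> 'a::field list \<Rightarrow> 'a poly \<Rightarrow> 'a poly" where
  "K_ops n [] p = p"
| "K_ops n (a # as) p = K_op n a (K_ops n as p)"

lemma coeff_euler_op: "coeff (euler_op p) j = of_nat j * coeff p j"
  by (cases j) (simp_all add: euler_op_def coeff_pderiv)

lemma euler_op_eq_mult: "euler_op p = [:0, 1:] * pderiv p"
  by (simp add: euler_op_def)

lemma coeff_K_op: "coeff (K_op n a p) j = K_weight n a (of_nat j) * coeff p j"
  by (simp add: K_op_def K_weight_def coeff_euler_op algebra_simps)

lemma coeff_K_ops: "coeff (K_ops n as p) j = (\<Prod>a\<leftarrow>as. K_weight n a (of_nat j)) * coeff p j"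
  by (induction as) (simp_all add: coeff_K_op)

lemma degree_K_op_le: "degree (K_op n a p) \<le> degree p"
  by (rule degree_le) (simp add: coeff_K_op coeff_eq_0)

lemma degree_K_ops_le: "degree (K_ops n as p) \<le> degree p"
  by (induction as) (auto intro: order.trans[OF degree_K_op_le])

lemma prod_list_filter_split:
  "prod_list (map f xs) = prod_list (map f (filter P xs)) * prod_list (map f (filter (\<lambda>x. \<not> P x) xs))"
  for f :: "'b \<Rightarrow> 'a::comm_monoid_mult"
  by (induction xs) (auto simp: algebra_simps)

lemma K_ops_filter_split: "K_ops n xs p = K_ops n (filter P xs) (K_ops n (filter (\<lambda>x. \<not> P x) xs) p)"
  by (rule poly_eqI) (simp add: coeff_K_ops prod_list_filter_split[of _ xs P])

lemma coeff_x_plus_1_power: "coeff ([:1, 1:] ^ m) i = (of_nat (m choose i) :: 'a::comm_semiring_1)"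
proof (cases "i \<le> m")
  case True
  then show ?thesis using coeff_linear_poly_power[OF True, of "1::'a" 1] by simp
next
  case False
  have "degree ([:1::'a, 1:] ^ m) \<le> m"
    using degree_power_le[of "[:1::'a, 1:]" m] by (cases "(1::'a) = 0") auto
  then show ?thesis using False by (simp add: coeff_eq_0 binomial_eq_0)
qed

lemma coeff_K_poly:
  assumes "n \<ge> 1"
  shows "coeff (K_poly n a) j = of_nat (n choose j) * K_weight n a (of_nat j)"
proof -
  have nz: "(of_nat n :: complex) \<noteq> 0" using assms by simp
  have K: "K_poly n a = smult a ([:1, 1:] ^ (n - 1)) + pCons 0 ([:1, 1:] ^ (n - 1))"
    unfolding K_poly_def by (simp add: mult.commute[of _ "[:a, 1:]"] mult_pCons_left)
  have absorb_comp: "(of_nat n - of_nat j) * of_nat (n choose j) = (of_nat n * of_nat ((n - 1) choose j) :: complex)"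
  proof (cases "j \<le> n")
    case True
    then show ?thesis using arg_cong[OF binomial_absorb_comp[of n j], of "of_nat :: nat \<Rightarrow> complex"]
      by (simp add: of_nat_diff)
  qed (simp add: binomial_eq_0)
  show ?thesis
  proof (cases j)
    case 0
    then show ?thesis using K by (simp add: coeff_x_plus_1_power K_weight_def)
  next
    case (Suc i)
    have absorb: "of_nat j * of_nat (n choose j) = (of_nat n * of_nat ((n - 1) choose i) :: complex)"
      using arg_cong[OF binomial_absorption[of i n], of "of_nat :: nat \<Rightarrow> complex"] Suc
      by (simp add: algebra_simps)
    have "of_nat n * (of_nat (n choose j) * K_weight n a (of_nat j))
        = a * ((of_nat n - of_nat j) * of_nat (n choose j)) + of_nat j * of_nat (n choose j)"
      using nz by (simp add: K_weight_def field_simps)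
    also have "\<dots> = of_nat n * (a * of_nat ((n - 1) choose j) + of_nat ((n - 1) choose i))"
      unfolding absorb_comp absorb by (simp add: algebra_simps)
    finally show ?thesis using K Suc nz by (simp add: coeff_x_plus_1_power)
  qed
qed

lemma coeff_schur_szego:
  "coeff (schur_szego n A B) j = (if j \<le> n then coeff A j * coeff B j / of_nat (n choose j) else 0)"
  unfolding schur_szego_def by (simp add: nth_default_def del: upt_Suc)

lemma schur_szego_K_eq_K_ops:
  assumes "n \<ge> 1"
  shows "schur_szego_K n as = K_ops n as ([:1, 1:] ^ n)"
proof (induction as)
  case Nil
  then show ?case by (simp add: schur_szego_K_def)
next
  case (Cons a as)
  have "coeff (schur_szego n (K_poly n a) (K_ops n as ([:1, 1:] ^ n))) j
      = coeff (K_op n a (K_ops n as ([:1, 1:] ^ n))) j" for j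
    by (cases "j \<le> n") (simp_all add: coeff_schur_szego coeff_K_op coeff_K_poly[OF assms]
        coeff_K_ops coeff_x_plus_1_power binomial_eq_0)
  then show ?case using Cons by (auto simp: schur_szego_K_def intro: poly_eqI)
qed

lemma map_poly_Re_K_op: "map_poly Re (K_op n (complex_of_real a) p) = K_op n a (map_poly Re p)"
proof -
  have "K_weight n (complex_of_real a) (of_nat j) = complex_of_real (K_weight n a (of_nat j))" for j
    by (simp add: K_weight_def)
  then show ?thesis by (intro poly_eqI) (simp add: coeff_map_poly coeff_K_op)
qed

lemma map_poly_Re_K_ops:
  "map_poly Re (K_ops n (map complex_of_real xs) p) = K_ops n xs (map_poly Re p)"
  by (induction xs) (simp_all add: map_poly_Re_K_op)

lemma dvd_map_poly_Re:
  assumes "map_poly complex_of_real q dvd s"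
  shows "q dvd map_poly Re s"
proof -
  obtain r where s: "s = map_poly complex_of_real q * r" using assms by (elim dvdE)
  have "map_poly Re s = q * map_poly Re r"
    unfolding s by (intro poly_eqI) (simp add: coeff_mult coeff_map_poly)
  then show ?thesis by simp
qed

lemma map_poly_of_real_x_plus_1_power: "map_poly complex_of_real ([:1, 1:] ^ e) = [:1, 1:] ^ e"
  by (rule poly_eqI) (simp add: coeff_map_poly coeff_x_plus_1_power)

lemma power_lin_dvd_pderiv:
  fixes p :: "'a::{idom,semiring_char_0} poly"
  assumes "[:-c, 1:] ^ e dvd p"
  shows "[:-c, 1:] ^ (e - 1) dvd pderiv p"
proof (cases "p = 0 \<or> pderiv p = 0")
  case False
  then have "e \<le> order c p" using assms by (simp add: order_divides)
  moreover have "order c p = Suc (order c (pderiv p))" if "poly p c = 0"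
    using order_pderiv[OF _ that] False by simp
  moreover have "order c p = 0" if "poly p c \<noteq> 0" using that order_root by blast
  ultimately have "e - 1 \<le> order c (pderiv p)" by (cases "poly p c = 0") auto
  then show ?thesis by (simp add: order_divides)
qed auto

lemma power_lin_dvd_K_ops:
  fixes p :: "'a::field_char_0 poly"
  assumes "[:-c, 1:] ^ e dvd p"
  shows "[:-c, 1:] ^ (e - length as) dvd K_ops n as p"
proof (induction as)
  case (Cons a as)
  let ?q = "K_ops n as p"
  have "[:-c, 1:] ^ (e - length (a # as)) dvd [:-c, 1:] ^ (e - length as)"
    by (rule le_imp_power_dvd) simp
  then have "[:-c, 1:] ^ (e - length (a # as)) dvd ?q" using Cons.IH by (rule dvd_trans)
  moreover have "[:-c, 1:] ^ (e - length (a # as)) dvd euler_op ?q"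
    unfolding euler_op_eq_mult using power_lin_dvd_pderiv[OF Cons.IH] by (intro dvd_mult) simp
  ultimately show ?case by (simp add: K_op_def dvd_add dvd_smult)
qed (simp add: assms)

section \<open>Rolle's theorem for \<open>x d/dx - t\<close>\<close>

definition euler_shift :: "real \<Rightarrow> real poly \<Rightarrow> real poly" where
  "euler_shift t u = euler_op u - smult t u"

lemma poly_euler_shift: "poly (euler_shift t u) x = x * poly (pderiv u) x - t * poly u x"
  by (simp add: euler_shift_def euler_op_def)

lemma euler_shift_nonzero:
  assumes "u \<noteq> 0" "real (degree u) \<noteq> t"
  shows "euler_shift t u \<noteq> 0"
proof -
  have "coeff (euler_shift t u) (degree u) = (real (degree u) - t) * lead_coeff u"
    by (simp add: euler_shift_def coeff_euler_op algebra_simps)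
  then show ?thesis using assms by auto
qed

lemma order_le_Suc_order_euler_shift:
  assumes "u \<noteq> 0" "euler_shift t u \<noteq> 0"
  shows "order r u \<le> Suc (order r (euler_shift t u))"
proof (cases "poly u r = 0")
  case False
  then show ?thesis by (simp add: order_0I)
next
  case True
  define m where "m = order r (pderiv u)"
  have ord: "order r u = Suc m" unfolding m_def using order_pderiv[OF assms(1) True] .
  have "[:-r, 1:] ^ m dvd pderiv u" unfolding m_def by (rule order_1)
  moreover have "[:-r, 1:] ^ m dvd u"
    using order_1[of r u] ord by (metis dvd_trans le_imp_power_dvd lessI less_imp_le)
  ultimately have "[:-r, 1:] ^ m dvd euler_shift t u"
    unfolding euler_shift_def euler_op_eq_mult by (intro dvd_diff dvd_mult dvd_smult)
  then show ?thesis using assms(2) ord by (simp add: order_divides)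
qed

text \<open>On the negative axis \<open>euler_shift t u\<close> is, up to a positive factor, the derivative of
  \<open>|x|\<^sup>-\<^sup>t u(x)\<close>, so Rolle's theorem places its roots between those of \<open>u\<close>.\<close>

definition weighted_poly :: "real \<Rightarrow> real poly \<Rightarrow> real \<Rightarrow> real" where
  "weighted_poly t u x = \<bar>x\<bar> powr (- t) * poly u x"

lemma weighted_poly_has_derivative:
  assumes "x < 0"
  shows "DERIV (weighted_poly t u) x :> - ((- x) powr (- t - 1)) * poly (euler_shift t u) x"
proof -
  have "DERIV (\<lambda>x. (- x) powr (- t)) x :> (- t) * (- x) powr (- t - of_nat 1) * (- 1)"
    by (rule DERIV_fun_powr) (auto intro!: derivative_eq_intros simp: assms)
  then have deriv: "DERIV (\<lambda>x. (- x) powr (- t) * poly u x) x :>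
      ((- t) * (- x) powr (- t - of_nat 1) * (- 1)) * poly u x + poly (pderiv u) x * (- x) powr (- t)"
    by (rule DERIV_mult[OF _ poly_DERIV])
  have "eventually (\<lambda>y. y \<in> {..<0}) (nhds x)" using assms by (intro eventually_nhds_in_open) auto
  then have ev: "eventually (\<lambda>y. (- y) powr (- t) * poly u y = weighted_poly t u y) (nhds x)"
    by eventually_elim (auto simp: weighted_poly_def)
  have "(- x) powr (- t) = (- x) powr (- t - 1) * (- x)"
    using assms powr_add[of "- x" "- t - 1" 1] by simp
  then have "((- t) * (- x) powr (- t - of_nat 1) * (- 1)) * poly u x + poly (pderiv u) x * (- x) powr (- t)
      = - ((- x) powr (- t - 1)) * poly (euler_shift t u) x"
    unfolding poly_euler_shift by (simp add: algebra_simps)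
  then show ?thesis using deriv by (subst (asm) DERIV_cong_ev[OF refl ev refl]) simp
qed

lemma weighted_poly_critical_point:
  assumes "c < 0" "DERIV (weighted_poly t u) c :> 0"
  shows "poly (euler_shift t u) c = 0"
proof -
  have "- ((- c) powr (- t - 1)) * poly (euler_shift t u) c = 0"
    using DERIV_unique[OF weighted_poly_has_derivative[OF assms(1)] assms(2)] .
  moreover have "(- c) powr (- t - 1) > 0" using assms(1) by simp
  ultimately show ?thesis by simp
qed

lemma weighted_poly_differentiable: "x < 0 \<Longrightarrow> weighted_poly t u differentiable (at x)"
  using weighted_poly_has_derivative real_differentiable_def by blast

lemma continuous_on_weighted_poly: "S \<subseteq> {..<0} \<Longrightarrow> continuous_on S (weighted_poly t u)"
  by (intro continuous_at_imp_continuous_on ballI DERIV_isCont[OF weighted_poly_has_derivative]) auto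

lemma weighted_poly_tendsto_at_bot:
  assumes "real (degree u) < t"
  shows "(weighted_poly t u \<longlongrightarrow> 0) at_bot"
proof -
  define g where "g x = (\<Sum>i\<le>degree u. coeff u i * ((-1) ^ i * (- x) powr (real i - t)))" for x
  have "eventually (\<lambda>x. x < (0::real)) at_bot" by (rule eventually_at_bot_linorderI[of "-1"]) simp
  then have ev: "eventually (\<lambda>x. weighted_poly t u x = g x) at_bot"
  proof eventually_elim
    case (elim x)
    have "\<bar>x\<bar> powr (- t) * x ^ i = (-1) ^ i * (- x) powr (real i - t)" for i
    proof -
      have "x ^ i = (-1) ^ i * (- x) powr (real i)"
        using elim by (simp add: powr_realpow power_minus[symmetric])
      then show ?thesis using elim by (simp add: powr_add[symmetric])
    qed
    then show ?case
      unfolding weighted_poly_def poly_altdef g_def by (simp add: sum_distrib_left algebra_simps)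
  qed
  have "(g \<longlongrightarrow> 0) at_bot"
    unfolding g_def
  proof (rule tendsto_null_sum)
    fix i assume "i \<in> {..degree u}"
    then have "real i - t < 0" using assms by auto
    then have "((\<lambda>x. (- x) powr (real i - t)) \<longlongrightarrow> 0) at_bot"
      by (rule tendsto_neg_powr) (rule filterlim_uminus_at_top_at_bot)
    then show "((\<lambda>x. coeff u i * ((-1) ^ i * (- x) powr (real i - t))) \<longlongrightarrow> 0) at_bot"
      by (intro tendsto_mult_right_zero)
  qed
  then show ?thesis using tendsto_cong[OF ev] by simp
qed

lemma Rolle_at_bot_pos:
  fixes f f' :: "real \<Rightarrow> real"
  assumes der: "\<And>x. x < b \<Longrightarrow> DERIV f x :> f' x"
    and cont: "continuous_on {..b} f" and "f b = 0" and lim: "(f \<longlongrightarrow> 0) at_bot"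
    and "x0 < b" "f x0 > 0"
  shows "\<exists>c<b. f' c = 0"
proof -
  define e where "e = f x0 / 2"
  have e: "e > 0" "e < f x0" using \<open>f x0 > 0\<close> by (auto simp: e_def)
  have "eventually (\<lambda>x. dist (f x) 0 < e) at_bot" using lim e(1) by (rule tendstoD)
  then obtain N where N: "\<And>x. x \<le> N \<Longrightarrow> \<bar>f x\<bar> < e" by (auto simp: eventually_at_bot_linorder)
  define y where "y = min N (x0 - 1)"
  have y: "y < x0" "f y < e" using N[of y] by (auto simp: y_def)
  have "continuous_on {y..x0} f" "continuous_on {x0..b} f"
    using cont \<open>x0 < b\<close> by (auto intro: continuous_on_subset)
  then obtain c1 c2 where c1: "y \<le> c1" "c1 \<le> x0" "f c1 = e" and c2: "x0 \<le> c2" "c2 \<le> b" "f c2 = e"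
    using IVT'[of f y e x0] IVT2'[of f b e x0] y e \<open>f b = 0\<close> \<open>x0 < b\<close> by auto
  have "c1 \<noteq> x0" using c1 e by auto
  then have "c1 < c2" using c1 c2 by linarith
  moreover have "continuous_on {c1..c2} f" using cont c2 by (auto intro: continuous_on_subset)
  moreover have "f differentiable (at x)" if "c1 < x" "x < c2" for x
    using der[of x] that c2 real_differentiable_def by force
  ultimately obtain z where z: "c1 < z" "z < c2" "DERIV f z :> 0"
    using Rolle[of c1 c2 f] c1 c2 by auto
  then have "z < b" using c2 by simp
  then show ?thesis using DERIV_unique[OF der z(3)] by blast
qed

lemma Rolle_at_bot:
  fixes f f' :: "real \<Rightarrow> real"
  assumes der: "\<And>x. x < b \<Longrightarrow> DERIV f x :> f' x"
    and cont: "continuous_on {..b} f" and fb: "f b = 0" and lim: "(f \<longlongrightarrow> 0) at_bot"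
  shows "\<exists>c<b. f' c = 0"
proof (cases "\<forall>x<b. f x = 0")
  case True
  have "f' (b - 1) = 0"
    by (rule DERIV_local_const[OF der[of "b - 1"], of 1]) (use True in auto)
  then show ?thesis by (intro exI[of _ "b - 1"]) auto
next
  case False
  then obtain x0 where x0: "x0 < b" "f x0 \<noteq> 0" by auto
  show ?thesis
  proof (cases "f x0 > 0")
    case True
    then show ?thesis using Rolle_at_bot_pos[OF der cont fb lim x0(1)] by blast
  next
    case False
    have "\<exists>c<b. - f' c = 0"
    proof (rule Rolle_at_bot_pos[of b "\<lambda>x. - f x" _ x0])
      show "DERIV (\<lambda>x. - f x) x :> - f' x" if "x < b" for x using der[OF that] by (rule DERIV_minus)
      show "continuous_on {..b} (\<lambda>x. - f x)" using cont by (rule continuous_on_minus)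
      show "((\<lambda>x. - f x) \<longlongrightarrow> 0) at_bot" using tendsto_minus[OF lim] by simp
    qed (use False x0 fb in auto)
    then show ?thesis by auto
  qed
qed

lemma euler_shift_root_between:
  assumes "r1 < r2" "r2 < 0" "poly u r1 = 0" "poly u r2 = 0"
  shows "\<exists>c. r1 < c \<and> c < r2 \<and> poly (euler_shift t u) c = 0"
proof -
  have "weighted_poly t u r1 = weighted_poly t u r2" using assms by (simp add: weighted_poly_def)
  moreover have "continuous_on {r1..r2} (weighted_poly t u)"
    using assms by (intro continuous_on_weighted_poly) auto
  moreover have "weighted_poly t u differentiable (at x)" if "r1 < x" "x < r2" for x
    using that assms(2) by (intro weighted_poly_differentiable) simp
  ultimately obtain c where "r1 < c" "c < r2" "DERIV (weighted_poly t u) c :> 0"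
    using Rolle[OF assms(1)] by blast
  then show ?thesis using assms(2) weighted_poly_critical_point by (metis order.strict_trans)
qed

lemma euler_shift_root_right:
  assumes "t < 0" "r < 0" "poly u r = 0"
  shows "\<exists>c. r < c \<and> c < 0 \<and> poly (euler_shift t u) c = 0"
proof -
  have "weighted_poly t u r = weighted_poly t u 0" using assms by (simp add: weighted_poly_def)
  moreover have "continuous_on {r..0} (weighted_poly t u)"
    unfolding weighted_poly_def using assms(1) by (intro continuous_intros continuous_on_powr') auto
  ultimately obtain c where "r < c" "c < 0" "DERIV (weighted_poly t u) c :> 0"
    using Rolle[OF assms(2)] weighted_poly_differentiable by blast
  then show ?thesis using weighted_poly_critical_point by blast
qed

lemma euler_shift_0_root_right:
  assumes "r < 0" "poly u r = 0" "poly u 0 = 0"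
  shows "\<exists>c. r < c \<and> c < 0 \<and> poly (euler_shift 0 u) c = 0"
proof -
  have "poly u r = poly u 0" using assms by simp
  moreover have "continuous_on {r..0} (poly u)" by (intro continuous_intros)
  ultimately obtain c where "r < c" "c < 0" "DERIV (poly u) c :> 0"
    using Rolle[OF assms(1)] poly_DERIV real_differentiable_def by blast
  then show ?thesis using DERIV_unique[OF poly_DERIV] by (auto simp: poly_euler_shift)
qed

lemma euler_shift_root_left:
  assumes "real (degree u) < t" "r < 0" "poly u r = 0"
  shows "\<exists>c<r. poly (euler_shift t u) c = 0"
proof -
  have "continuous_on {..r} (weighted_poly t u)"
    using assms(2) by (intro continuous_on_weighted_poly) auto
  moreover have "weighted_poly t u r = 0" using assms(3) by (simp add: weighted_poly_def)
  moreover have "DERIV (weighted_poly t u) x :> - ((- x) powr (- t - 1)) * poly (euler_shift t u) x"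
    if "x < r" for x using that assms(2) by (intro weighted_poly_has_derivative) simp
  ultimately have "\<exists>c<r. - ((- c) powr (- t - 1)) * poly (euler_shift t u) c = 0"
    using Rolle_at_bot[where f' = "\<lambda>c. - ((- c) powr (- t - 1)) * poly (euler_shift t u) c"]
      weighted_poly_tendsto_at_bot[OF assms(1)] by blast
  then obtain c where "c < r" "- ((- c) powr (- t - 1)) * poly (euler_shift t u) c = 0" by blast
  moreover have "(- c) powr (- t - 1) > 0" using \<open>c < r\<close> assms(2) by simp
  ultimately show ?thesis by auto
qed

section \<open>Negative roots under composition with \<open>K\<^sub>a\<close>\<close>

lemma neg_roots_0 [simp]: "neg_roots 0 = 0"
proof -
  have "{r::real. r < 0} = {..<0}" by auto
  then have "infinite {r::real. r < 0}" using infinite_Iio[of "0::real"] by simp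
  then show ?thesis unfolding neg_roots_def by simp
qed

lemma neg_roots_smult: "c \<noteq> 0 \<Longrightarrow> neg_roots (smult c p) = neg_roots p"
  by (simp add: neg_roots_def order_smult)

lemma neg_roots_const: "degree u = 0 \<Longrightarrow> neg_roots u = 0"
proof (elim degree_eq_zeroE)
  fix c assume "u = [:c:]"
  then show "neg_roots u = 0" by (cases "c = 0") (simp, simp add: neg_roots_def)
qed

lemma finite_neg_roots_set: "u \<noteq> 0 \<Longrightarrow> finite {r::real. r < 0 \<and> poly u r = 0}"
  using poly_roots_finite by (rule rev_finite_subset) auto

lemma sum_order_le_neg_roots:
  assumes "w \<noteq> 0" "finite X" "X \<subseteq> {r. r < 0}"
  shows "(\<Sum>r\<in>X. order r w) \<le> neg_roots w"
proof -
  let ?R = "{r::real. r < 0 \<and> poly w r = 0}"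
  have "(\<Sum>r\<in>X. order r w) = (\<Sum>r\<in>X \<inter> ?R. order r w)"
    using assms by (intro sum.mono_neutral_right) (auto simp: order_0I order_root)
  also have "\<dots> \<le> (\<Sum>r\<in>?R. order r w)"
    using finite_neg_roots_set[OF assms(1)] by (intro sum_mono2) auto
  finally show ?thesis unfolding neg_roots_def .
qed

text \<open>If each negative root of \<open>u\<close> loses at most one multiplicity in \<open>w\<close>, then every new root of
  \<open>w\<close> (not a root of \<open>u\<close>) that can be assigned injectively to a root of \<open>u\<close> makes up for one
  such loss.\<close>

lemma neg_roots_add_card_le:
  fixes u w :: "real poly" and f :: "real \<Rightarrow> real"
  defines "R \<equiv> {r. r < 0 \<and> poly u r = 0}"
  assumes w: "w \<noteq> 0" and u: "u \<noteq> 0"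
    and ord: "\<And>r. r \<in> R \<Longrightarrow> order r u \<le> Suc (order r w)"
    and "A \<subseteq> R" and "inj_on f A"
    and f: "\<And>r. r \<in> A \<Longrightarrow> f r < 0 \<and> poly w (f r) = 0 \<and> poly u (f r) \<noteq> 0"
  shows "neg_roots u + card A \<le> neg_roots w + card R"
proof -
  have finR: "finite R" unfolding R_def using finite_neg_roots_set[OF u] .
  then have "finite A" using \<open>A \<subseteq> R\<close> by (rule finite_subset[rotated])
  have "neg_roots u \<le> (\<Sum>r\<in>R. Suc (order r w))"
    unfolding neg_roots_def R_def[symmetric] by (rule sum_mono) (rule ord)
  also have "\<dots> = (\<Sum>r\<in>R. order r w) + card R" by (simp add: sum_Suc)
  finally have 1: "neg_roots u \<le> (\<Sum>r\<in>R. order r w) + card R" .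
  have "R \<inter> f ` A = {}" using f unfolding R_def by auto
  then have "(\<Sum>r\<in>R. order r w) + (\<Sum>r\<in>f ` A. order r w) = (\<Sum>r\<in>R \<union> f ` A. order r w)"
    using finR \<open>finite A\<close> by (simp add: sum.union_disjoint)
  also have "\<dots> \<le> neg_roots w"
    using finR \<open>finite A\<close> f by (intro sum_order_le_neg_roots[OF w]) (auto simp: R_def)
  finally have 2: "(\<Sum>r\<in>R. order r w) + (\<Sum>r\<in>f ` A. order r w) \<le> neg_roots w" .
  have "card A = (\<Sum>r\<in>A. 1)" by simp
  also have "\<dots> \<le> (\<Sum>r\<in>A. order (f r) w)"
    by (rule sum_mono) (use f w in \<open>auto simp: order_root Suc_le_eq\<close>)
  also have "\<dots> = (\<Sum>r\<in>f ` A. order r w)" using \<open>inj_on f A\<close> by (simp add: sum.reindex)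
  finally show ?thesis using 1 2 by linarith
qed

lemma neg_roots_le_of_roots_right:
  fixes u w :: "real poly"
  defines "R \<equiv> {r. r < 0 \<and> poly u r = 0}"
  assumes w: "w \<noteq> 0" and u: "u \<noteq> 0" and ord: "\<And>r. r \<in> R \<Longrightarrow> order r u \<le> Suc (order r w)"
    and "A \<subseteq> R" and right: "\<forall>r\<in>A. \<exists>c. r < c \<and> c < 0 \<and> poly w c = 0 \<and> (\<forall>y. r < y \<and> y \<le> c \<longrightarrow> poly u y \<noteq> 0)"
  shows "neg_roots u + card A \<le> neg_roots w + card R"
proof -
  obtain f where f: "\<And>r. r \<in> A \<Longrightarrow> r < f r \<and> f r < 0 \<and> poly w (f r) = 0 \<and>
      (\<forall>y. r < y \<and> y \<le> f r \<longrightarrow> poly u y \<noteq> 0)"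
    using bchoice[OF right] by blast
  have no_root_between: "\<not> (x < y \<and> f x = f y)" if "x \<in> A" "y \<in> A" for x y
  proof
    assume "x < y \<and> f x = f y"
    then have "x < y" "y \<le> f x" using f[OF that(2)] by auto
    then have "poly u y \<noteq> 0" using f[OF that(1)] by blast
    then show False using that(2) \<open>A \<subseteq> R\<close> by (auto simp: R_def)
  qed
  have "inj_on f A"
    by (rule inj_onI) (metis no_root_between linorder_neqE_linordered_idom)
  moreover have "f r < 0 \<and> poly w (f r) = 0 \<and> poly u (f r) \<noteq> 0" if "r \<in> A" for r
    using f[OF that] by auto
  ultimately show ?thesis
    using neg_roots_add_card_le[OF w u ord[unfolded R_def] \<open>A \<subseteq> R\<close>[unfolded R_def]]
    unfolding R_def by blast
qed

lemma neg_roots_le_of_roots_left: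
  fixes u w :: "real poly"
  defines "R \<equiv> {r. r < 0 \<and> poly u r = 0}"
  assumes w: "w \<noteq> 0" and u: "u \<noteq> 0" and ord: "\<And>r. r \<in> R \<Longrightarrow> order r u \<le> Suc (order r w)"
    and left: "\<forall>r\<in>R. \<exists>c. c < r \<and> poly w c = 0 \<and> (\<forall>y. c \<le> y \<and> y < r \<longrightarrow> poly u y \<noteq> 0)"
  shows "neg_roots u \<le> neg_roots w"
proof -
  obtain f where f: "\<And>r. r \<in> R \<Longrightarrow> f r < r \<and> poly w (f r) = 0 \<and>
      (\<forall>y. f r \<le> y \<and> y < r \<longrightarrow> poly u y \<noteq> 0)"
    using bchoice[OF left] by blast
  have no_root_between: "\<not> (x < y \<and> f x = f y)" if "x \<in> R" "y \<in> R" for x y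
  proof
    assume "x < y \<and> f x = f y"
    then have "x < y" "f y \<le> x" using f[OF that(1)] by auto
    then have "poly u x \<noteq> 0" using f[OF that(2)] by blast
    then show False using that(1) by (auto simp: R_def)
  qed
  have "inj_on f R"
    by (rule inj_onI) (metis no_root_between linorder_neqE_linordered_idom)
  moreover have "f r < 0 \<and> poly w (f r) = 0 \<and> poly u (f r) \<noteq> 0" if "r \<in> R" for r
    using f[OF that] that by (auto simp: R_def)
  ultimately have "neg_roots u + card R \<le> neg_roots w + card R"
    using neg_roots_add_card_le[OF w u ord[unfolded R_def] order_refl] unfolding R_def by blast
  then show ?thesis by simp
qed

lemma nearest_root_right:
  fixes u w :: "real poly"
  assumes "u \<noteq> 0"
    and between: "\<And>r1 r2. r1 < r2 \<Longrightarrow> r2 < 0 \<Longrightarrow> poly u r1 = 0 \<Longrightarrow> poly u r2 = 0 \<Longrightarrow>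
      \<exists>c. r1 < c \<and> c < r2 \<and> poly w c = 0"
    and "r < 0" "poly u r = 0"
    and "(\<exists>y. r < y \<and> y < 0 \<and> poly u y = 0) \<or> (\<exists>c. r < c \<and> c < 0 \<and> poly w c = 0)"
  shows "\<exists>c. r < c \<and> c < 0 \<and> poly w c = 0 \<and> (\<forall>y. r < y \<and> y \<le> c \<longrightarrow> poly u y \<noteq> 0)"
proof (cases "\<exists>y. r < y \<and> y < 0 \<and> poly u y = 0")
  case True
  define S where "S = {y. r < y \<and> y < 0 \<and> poly u y = 0}"
  have "finite S" unfolding S_def using poly_roots_finite[OF \<open>u \<noteq> 0\<close>] by (rule rev_finite_subset) auto
  moreover have "S \<noteq> {}" using True unfolding S_def by auto
  ultimately have min: "Min S \<in> S" "\<And>y. y \<in> S \<Longrightarrow> Min S \<le> y" by auto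
  obtain c where c: "r < c" "c < Min S" "poly w c = 0"
    using between[of r "Min S"] \<open>poly u r = 0\<close> min(1) unfolding S_def by auto
  have "poly u y \<noteq> 0" if "r < y" "y \<le> c" for y
    using min(2)[of y] that c min(1) unfolding S_def by force
  then show ?thesis using c min(1) unfolding S_def by auto
qed (use assms in auto)

lemma nearest_root_left:
  fixes u w :: "real poly"
  assumes "u \<noteq> 0"
    and between: "\<And>r1 r2. r1 < r2 \<Longrightarrow> r2 < 0 \<Longrightarrow> poly u r1 = 0 \<Longrightarrow> poly u r2 = 0 \<Longrightarrow>
      \<exists>c. r1 < c \<and> c < r2 \<and> poly w c = 0"
    and "r < 0" "poly u r = 0" "\<exists>c. c < r \<and> poly w c = 0"
  shows "\<exists>c. c < r \<and> poly w c = 0 \<and> (\<forall>y. c \<le> y \<and> y < r \<longrightarrow> poly u y \<noteq> 0)"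
proof (cases "\<exists>y. y < r \<and> poly u y = 0")
  case True
  define S where "S = {y. y < r \<and> poly u y = 0}"
  have "finite S" unfolding S_def using poly_roots_finite[OF \<open>u \<noteq> 0\<close>] by (rule rev_finite_subset) auto
  moreover have "S \<noteq> {}" using True unfolding S_def by auto
  ultimately have max: "Max S \<in> S" "\<And>y. y \<in> S \<Longrightarrow> y \<le> Max S" by auto
  obtain c where c: "Max S < c" "c < r" "poly w c = 0"
    using between[of "Max S" r] assms(3,4) max(1) unfolding S_def by auto
  have "poly u y \<noteq> 0" if "c \<le> y" "y < r" for y
    using max(2)[of y] that c unfolding S_def by force
  then show ?thesis using c by auto
qed (use assms in auto)

lemma neg_roots_euler_shift_right:
  assumes "u \<noteq> 0" "euler_shift t u \<noteq> 0"
    and right: "\<And>r. r < 0 \<Longrightarrow> poly u r = 0 \<Longrightarrow> \<exists>c. r < c \<and> c < 0 \<and> poly (euler_shift t u) c = 0"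
  shows "neg_roots u \<le> neg_roots (euler_shift t u)"
proof -
  let ?R = "{r. r < 0 \<and> poly u r = 0}"
  have "neg_roots u + card ?R \<le> neg_roots (euler_shift t u) + card ?R"
  proof (rule neg_roots_le_of_roots_right[OF assms(2,1) order_le_Suc_order_euler_shift[OF assms(1,2)]
        order_refl])
    show "\<forall>r\<in>?R. \<exists>c. r < c \<and> c < 0 \<and> poly (euler_shift t u) c = 0 \<and>
        (\<forall>y. r < y \<and> y \<le> c \<longrightarrow> poly u y \<noteq> 0)"
      using right by (auto intro!: nearest_root_right[OF assms(1) euler_shift_root_between])
  qed
  then show ?thesis by simp
qed

lemma neg_roots_euler_shift_left:
  assumes "u \<noteq> 0" "euler_shift t u \<noteq> 0"
    and left: "\<And>r. r < 0 \<Longrightarrow> poly u r = 0 \<Longrightarrow> \<exists>c. c < r \<and> poly (euler_shift t u) c = 0"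
  shows "neg_roots u \<le> neg_roots (euler_shift t u)"
proof (rule neg_roots_le_of_roots_left[OF assms(2,1) order_le_Suc_order_euler_shift[OF assms(1,2)]])
  show "\<forall>r\<in>{r. r < 0 \<and> poly u r = 0}. \<exists>c. c < r \<and> poly (euler_shift t u) c = 0 \<and>
      (\<forall>y. c \<le> y \<and> y < r \<longrightarrow> poly u y \<noteq> 0)"
    using left by (auto intro!: nearest_root_left[OF assms(1) euler_shift_root_between])
qed

text \<open>Without a root of \<open>euler_shift t u\<close> to the right of the largest negative root of \<open>u\<close>,
  only that root may be lost.\<close>

lemma neg_roots_euler_shift_le_Suc:
  assumes "u \<noteq> 0" "euler_shift t u \<noteq> 0"
  shows "neg_roots u \<le> neg_roots (euler_shift t u) + 1"
proof -
  define R where "R = {r::real. r < 0 \<and> poly u r = 0}"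
  have "finite R" unfolding R_def using finite_neg_roots_set[OF assms(1)] .
  show ?thesis
  proof (cases "R = {}")
    case True
    then show ?thesis unfolding neg_roots_def R_def[symmetric] by simp
  next
    case False
    define A where "A = R - {Max R}"
    have max: "Max R \<in> R" "\<And>r. r \<in> R \<Longrightarrow> r \<le> Max R" using \<open>finite R\<close> False by auto
    then have "card A + 1 = card R" unfolding A_def using card_Suc_Diff1[OF \<open>finite R\<close>] by simp
    moreover have "neg_roots u + card A \<le> neg_roots (euler_shift t u) + card R"
      unfolding R_def
    proof (rule neg_roots_le_of_roots_right[OF assms(2,1) order_le_Suc_order_euler_shift[OF assms(1,2)]])
      show "A \<subseteq> {r. r < 0 \<and> poly u r = 0}" unfolding A_def R_def by blast
      show "\<forall>r\<in>A. \<exists>c. r < c \<and> c < 0 \<and> poly (euler_shift t u) c = 0 \<and>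
          (\<forall>y. r < y \<and> y \<le> c \<longrightarrow> poly u y \<noteq> 0)"
      proof
        fix r assume "r \<in> A"
        then have "r \<in> R" "r < Max R" using max unfolding A_def by force+
        then show "\<exists>c. r < c \<and> c < 0 \<and> poly (euler_shift t u) c = 0 \<and>
            (\<forall>y. r < y \<and> y \<le> c \<longrightarrow> poly u y \<noteq> 0)"
          using max(1) unfolding R_def
          by (intro nearest_root_right[OF assms(1) euler_shift_root_between]) auto
      qed
    qed
    ultimately show ?thesis by simp
  qed
qed

lemma K_op_eq_smult_euler_shift:
  assumes "a \<noteq> 1" "n > 0"
  shows "K_op n a u = smult ((1 - a) / real n) (euler_shift (real n * a / (a - 1)) u)"
proof -
  have "(1 - a) / real n * (real n * a / (a - 1)) = - a"
    using assms by (simp add: field_simps)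
  then show ?thesis unfolding K_op_def euler_shift_def
    by (simp add: smult_diff_right algebra_simps)
qed

lemma degree_eq_0_if_euler_shift_0_eq_0: "euler_shift 0 u = 0 \<Longrightarrow> degree u = 0"
  by (simp add: euler_shift_def euler_op_def pderiv_eq_0_iff)

text \<open>For \<open>0 < a < 1\<close> the shift \<open>n a / (a - 1)\<close> is negative and for \<open>a > 1\<close> it exceeds \<open>n\<close>,
  so in both cases no negative root is lost.\<close>

lemma neg_roots_K_op_pos:
  assumes "a > 0" "degree u \<le> n" "n > 0"
  shows "neg_roots u \<le> neg_roots (K_op n a u)"
proof (cases "u = 0 \<or> a = 1")
  case True
  then show ?thesis by (auto simp: K_op_def euler_op_def)
next
  case False
  define t where "t = real n * a / (a - 1)"
  have "K_op n a u = smult ((1 - a) / real n) (euler_shift t u)"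
    unfolding t_def using False assms(3) by (intro K_op_eq_smult_euler_shift) auto
  moreover have "(1 - a) / real n \<noteq> 0" using False assms(3) by simp
  ultimately have K: "neg_roots (K_op n a u) = neg_roots (euler_shift t u)"
    by (simp add: neg_roots_smult)
  consider "a < 1" | "a > 1" using False by fastforce
  then show ?thesis
  proof cases
    case 1
    then have "t < 0" unfolding t_def using assms(1,3) by (simp add: divide_pos_neg)
    then have "euler_shift t u \<noteq> 0" using False by (intro euler_shift_nonzero) auto
    then show ?thesis unfolding K using False \<open>t < 0\<close>
      by (intro neg_roots_euler_shift_right euler_shift_root_right) auto
  next
    case 2
    then have "real n < t" unfolding t_def using assms(3) by (simp add: field_simps)
    then have "real (degree u) < t" using assms(2) by linarith
    then have "euler_shift t u \<noteq> 0" using False by (intro euler_shift_nonzero) auto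
    then show ?thesis unfolding K using False \<open>real (degree u) < t\<close>
      by (intro neg_roots_euler_shift_left euler_shift_root_left) auto
  qed
qed

lemma neg_roots_K_op_0:
  assumes "n > 0"
  shows "neg_roots u \<le> neg_roots (K_op n 0 u) + (if poly u 0 = 0 then 0 else 1)"
proof (cases "euler_shift 0 u = 0")
  case True
  then show ?thesis by (simp add: neg_roots_const degree_eq_0_if_euler_shift_0_eq_0)
next
  case False
  then have "u \<noteq> 0" by (auto simp: euler_shift_def euler_op_def)
  have "K_op n 0 u = smult (1 / real n) (euler_shift 0 u)" by (simp add: K_op_def euler_shift_def)
  then have K: "neg_roots (K_op n 0 u) = neg_roots (euler_shift 0 u)"
    using assms by (simp add: neg_roots_smult)
  show ?thesis
  proof (cases "poly u 0 = 0")
    case True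
    then show ?thesis unfolding K using \<open>u \<noteq> 0\<close> False
      by (simp add: neg_roots_euler_shift_right euler_shift_0_root_right)
  next
    case False
    then show ?thesis
      unfolding K using neg_roots_euler_shift_le_Suc[OF \<open>u \<noteq> 0\<close> \<open>euler_shift 0 u \<noteq> 0\<close>] by simp
  qed
qed

lemma poly_K_ops_0: "poly (K_ops n xs u) 0 = prod_list xs * poly u 0"
  by (simp add: poly_0_coeff_0 coeff_K_ops K_weight_def)

lemma neg_roots_K_ops:
  assumes "\<forall>x\<in>set xs. x \<ge> 0" "degree u \<le> n" "n > 0"
  shows "neg_roots u \<le> neg_roots (K_ops n xs u) + (if 0 \<in> set xs \<and> poly u 0 \<noteq> 0 then 1 else 0)"
  using assms(1)
proof (induction xs)
  case (Cons a xs)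
  let ?w = "K_ops n xs u"
  have IH: "neg_roots u \<le> neg_roots ?w + (if 0 \<in> set xs \<and> poly u 0 \<noteq> 0 then 1 else 0)"
    using Cons by simp
  have "degree ?w \<le> n" using degree_K_ops_le[of n xs u] assms(2) by simp
  show ?case
  proof (cases "a = 0")
    case False
    then have "neg_roots ?w \<le> neg_roots (K_op n a ?w)"
      using Cons.prems neg_roots_K_op_pos[OF _ \<open>degree ?w \<le> n\<close> assms(3)] by simp
    then show ?thesis using IH False by auto
  next
    case a0: True
    have step: "neg_roots ?w \<le> neg_roots (K_op n 0 ?w) + (if poly ?w 0 = 0 then 0 else 1)"
      by (rule neg_roots_K_op_0[OF assms(3)])
    show ?thesis
    proof (cases "poly u 0 = 0")
      case True
      then show ?thesis using IH step a0 by (simp add: poly_K_ops_0)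
    next
      case False
      have "neg_roots u \<le> neg_roots ?w + 1" using IH by (simp split: if_split_asm)
      moreover have "neg_roots u \<le> neg_roots ?w" if "poly ?w 0 \<noteq> 0"
        using IH that False poly_K_ops_0[of n xs u] by (simp add: prod_list_zero_iff)
      ultimately show ?thesis using step False a0 by (cases "poly ?w 0 = 0") auto
    qed
  qed
qed simp

section \<open>Real polynomials composed from the \<open>K\<^sub>a\<close>\<close>

text \<open>\<open>weight_poly n as\<close> is the polynomial \<open>\<phi>(t) = \<Prod>\<^sub>i ((n - t) a\<^sub>i + t) / n\<close> whose values at
  \<open>t = 0, \<dots>, n\<close> are the normalised coefficients of \<open>K\<^sub>a\<^sub>1 * \<dots> * K\<^sub>a\<^sub>s\<close>.\<close>

definition weight_poly :: "nat \<Rightarrow> complex list \<Rightarrow> complex poly" where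
  "weight_poly n as = (\<Prod>a\<leftarrow>as. [:a, (1 - a) / of_nat n:])"

lemma poly_weight_poly: "poly (weight_poly n as) t = (\<Prod>a\<leftarrow>as. K_weight n a t)"
  by (induction as) (simp_all add: weight_poly_def K_weight_def algebra_simps)

lemma degree_weight_poly_le: "degree (weight_poly n as) \<le> length as"
proof (induction as)
  case (Cons a as)
  have "degree (weight_poly n (a # as)) \<le> degree [:a, (1 - a) / of_nat n:] + degree (weight_poly n as)"
    unfolding weight_poly_def list.map prod_list.Cons by (rule degree_mult_le)
  also have "\<dots> \<le> 1 + length as" using Cons.IH by (intro add_mono) simp_all
  finally show ?case by simp
qed (simp add: weight_poly_def)

lemma coeff_schur_szego_K:
  assumes "n \<ge> 1"
  shows "coeff (schur_szego_K n as) j = of_nat (n choose j) * poly (weight_poly n as) (of_nat j)"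
  by (simp add: schur_szego_K_eq_K_ops[OF assms] coeff_K_ops coeff_x_plus_1_power poly_weight_poly)

lemma poly_weight_poly_n: "n \<ge> 1 \<Longrightarrow> poly (weight_poly n as) (of_nat n) = 1"
  by (induction as) (simp_all add: poly_weight_poly K_weight_def)

lemma root_weight_poly:
  assumes "0 < t" "t < real n" "poly (weight_poly n as) (complex_of_real t) = 0"
  shows "complex_of_real (- t / (real n - t)) \<in> set as"
proof -
  obtain a where a: "a \<in> set as" "K_weight n a (complex_of_real t) = 0"
    using assms(3) unfolding poly_weight_poly by (auto simp: prod_list_zero_iff)
  have "real n - t \<noteq> 0" using assms(2) by simp
  then have "complex_of_real (real n - t) \<noteq> 0" by (metis of_real_eq_0_iff)
  moreover have "(of_nat n :: complex) \<noteq> 0" using assms by auto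
  moreover have "a * complex_of_real (real n - t) = - complex_of_real t"
    using a(2) \<open>(of_nat n :: complex) \<noteq> 0\<close> by (simp add: K_weight_def field_simps)
  ultimately have "a = complex_of_real (- t / (real n - t))" by (simp add: field_simps)
  then show ?thesis using a(1) by simp
qed

lemma length_filter_disj:
  "(\<And>x. \<not> (P x \<and> Q x)) \<Longrightarrow> length (filter (\<lambda>x. P x \<or> Q x) xs) = length (filter P xs) + length (filter Q xs)"
  by (induction xs) auto

lemma coeff_eq_0_below_order_0:
  assumes "j < order 0 p"
  shows "coeff p j = 0"
proof (cases "p = 0")
  case False
  then have "monom 1 (order 0 p) dvd p" by (simp add: monom_1_dvd_iff)
  then show ?thesis using assms by (simp add: monom_1_dvd_iff')
qed simp

lemma coeff_order_0_nonzero: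
  assumes "p \<noteq> 0"
  shows "coeff p (order 0 p) \<noteq> 0"
proof
  assume "coeff p (order 0 p) = 0"
  then have "\<forall>j<Suc (order 0 p). coeff p j = 0" using coeff_eq_0_below_order_0 less_Suc_eq by auto
  then show False using monom_1_dvd_iff[OF assms, of "Suc (order 0 p)"] by (simp add: monom_1_dvd_iff')
qed

lemma inj_on_neg_ratio: "c \<noteq> 0 \<Longrightarrow> inj_on (\<lambda>t. - t / (c - t)) {t. t < c}" for c :: real
  by (rule inj_onI) (auto simp: field_simps)

locale real_schur_szego_K =
  fixes n :: nat and P :: "real poly" and as :: "complex list"
  assumes n_pos: "n \<ge> 1" and length_as: "length as \<le> n"
    and rep: "map_poly complex_of_real P = schur_szego_K n as"
begin

abbreviation W :: "complex poly" where "W \<equiv> weight_poly n as"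

lemma coeff_P: "complex_of_real (coeff P j) = of_nat (n choose j) * poly W (of_nat j)"
  using arg_cong[OF rep, of "\<lambda>p. coeff p j"] by (simp add: coeff_map_poly coeff_schur_szego_K[OF n_pos])

text \<open>\<open>W\<close> takes real values at the \<open>n + 1 > deg W\<close> points \<open>0, \<dots>, n\<close>, hence has real coefficients.\<close>

lemma map_poly_cnj_W: "map_poly cnj W = W"
proof (rule poly_eqI_degree[of "of_nat ` {0..n}"])
  fix x :: complex assume "x \<in> of_nat ` {0..n}"
  then obtain j where j: "j \<le> n" "x = of_nat j" by auto
  then have "poly W x = complex_of_real (coeff P j / real (n choose j))"
    using coeff_P[of j] by (simp add: field_simps)
  then show "poly (map_poly cnj W) x = poly W x" using j(2) by simp
next
  have "card (of_nat ` {0..n} :: complex set) = Suc n"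
    by (subst card_image) (auto simp: inj_on_def)
  then show "degree (map_poly cnj W) < card (of_nat ` {0..n} :: complex set)"
    and "degree W < card (of_nat ` {0..n} :: complex set)"
    using degree_weight_poly_le[of n as] length_as by (simp_all add: degree_map_poly)
qed

definition phi :: "real \<Rightarrow> real" where
  "phi t = Re (poly W (complex_of_real t))"

lemma poly_W_of_real: "poly W (complex_of_real t) = complex_of_real (phi t)"
proof -
  have "cnj (poly W (complex_of_real t)) = poly W (complex_of_real t)"
    using arg_cong[OF map_poly_cnj_W, of "\<lambda>p. poly p (complex_of_real t)"] by simp
  then have "Im (poly W (complex_of_real t)) = 0" by (metis cnj.simps(2) neg_equal_zero)
  then show ?thesis unfolding phi_def by (simp add: complex_eq_iff)
qed

lemma coeff_P_eq: "coeff P j = real (n choose j) * phi (real j)"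
proof -
  have "complex_of_real (coeff P j) = complex_of_real (real (n choose j) * phi (real j))"
    using coeff_P[of j] poly_W_of_real[of "real j"] by simp
  then show ?thesis by (simp only: of_real_eq_iff)
qed

lemma phi_n: "phi (real n) = 1"
  using poly_W_of_real[of "real n"] poly_weight_poly_n[OF n_pos] by simp

lemma coeff_P_n: "coeff P n = 1"
  by (simp add: coeff_P_eq phi_n)

lemma P_nonzero: "P \<noteq> 0"
  using coeff_P_n by auto

lemma continuous_phi: "continuous_on UNIV phi"
  unfolding phi_def by (intro continuous_intros)

lemma finite_phi_roots: "finite {t. phi t = 0}"
proof -
  have "W \<noteq> 0" using poly_weight_poly_n[OF n_pos, of as] by auto
  have "{t. phi t = 0} \<subseteq> complex_of_real -` {z. poly W z = 0}" using poly_W_of_real by auto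
  moreover have "finite (complex_of_real -` {z. poly W z = 0})"
    by (rule finite_vimageI[OF poly_roots_finite[OF \<open>W \<noteq> 0\<close>]]) (auto simp: inj_on_def)
  ultimately show ?thesis by (rule finite_subset)
qed

lemma phi_root: "0 < t \<Longrightarrow> t < real n \<Longrightarrow> phi t = 0 \<Longrightarrow> complex_of_real (- t / (real n - t)) \<in> set as"
  by (rule root_weight_poly) (simp_all add: poly_W_of_real)

lemma poly_P_0_eq_0_iff: "poly P 0 = 0 \<longleftrightarrow> 0 \<in> set as"
proof -
  have "poly W 0 = (\<Prod>a\<leftarrow>as. a)"
    unfolding poly_weight_poly by (simp add: K_weight_def)
  moreover have "complex_of_real (poly P 0) = poly W 0"
    using coeff_P[of 0] by (simp add: poly_0_coeff_0)
  ultimately have "complex_of_real (poly P 0) = prod_list as" by simp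
  then show ?thesis by (metis of_real_eq_0_iff prod_list_zero_iff)
qed

lemma order_0_P_le: "order 0 P \<le> n"
  using coeff_P_n coeff_eq_0_below_order_0[of n P] by (metis not_le one_neq_zero)

lemma phi_below_order_0: "j < order 0 P \<Longrightarrow> phi (real j) = 0"
  using coeff_eq_0_below_order_0[of j P] coeff_P_eq[of j] order_0_P_le by simp

lemma phi_order_0: "phi (real (order 0 P)) \<noteq> 0"
  using coeff_order_0_nonzero[OF P_nonzero] coeff_P_eq by auto

lemma degree_P: "degree P = n"
proof (rule antisym)
  show "degree P \<le> n" by (rule degree_le) (simp add: coeff_P_eq)
  show "n \<le> degree P" using coeff_P_n by (intro le_degree) simp
qed

lemma coeff_sign_changes_P:
  "coeff_sign_changes P = sign_changes (map (\<lambda>j. phi (real j)) [order 0 P..<Suc n])"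
proof -
  have sgn_eq: "\<forall>j\<in>set [0..<Suc n]. sgn (coeff P j) = sgn (phi (real j))"
    by (auto simp: coeff_P_eq sgn_mult)
  have "coeffs P = map (coeff P) [0..<Suc n]" using P_nonzero degree_P by (simp add: coeffs_def)
  moreover have "sign_changes (map (coeff P) [0..<Suc n]) = sign_changes (map (\<lambda>j. phi (real j)) [0..<Suc n])"
    using sign_changes_cong_sgn[OF sgn_eq] by blast
  ultimately have "coeff_sign_changes P = sign_changes (map (\<lambda>j. phi (real j)) [0..<Suc n])"
    unfolding coeff_sign_changes_def by simp
  also have "[0..<Suc n] = [0..<order 0 P] @ [order 0 P..<Suc n]"
    using upt_add_eq_append[of 0 "order 0 P" "Suc n - order 0 P"] order_0_P_le by simp
  finally show ?thesis
    by (simp add: sign_changes_zeros_append phi_below_order_0)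
qed

lemma pos_roots_P_le: "pos_roots P \<le> card {t. real (order 0 P) \<le> t \<and> t < real n \<and> phi t = 0}"
proof -
  have "pos_roots P \<le> sign_changes (map (\<lambda>j. phi (real j)) [order 0 P..<Suc n])"
    using descartes_rule_of_signs[OF P_nonzero] coeff_sign_changes_P by simp
  also have "\<dots> \<le> card {t. real (order 0 P) \<le> t \<and> t < real n \<and> phi t = 0}"
    using sign_changes_samples_le_card_roots[OF continuous_phi finite_phi_roots order_0_P_le] phi_n
    by simp
  finally show ?thesis .
qed

lemma neg_ratio_in_as_below_order: "j \<in> {1..<order 0 P} \<Longrightarrow> complex_of_real (- real j / (real n - real j)) \<in> set as"
  using phi_root[of "real j"] phi_below_order_0[of j] order_0_P_le by auto

lemma pos_roots_P_add_le:
  "pos_roots P + (order 0 P - 1) \<le> card {x. x < 0 \<and> complex_of_real x \<in> set as}"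
proof -
  define k where "k = order 0 P"
  define T where "T = real ` {1..<k} \<union> {t. real k \<le> t \<and> t < real n \<and> phi t = 0}"
  let ?b = "\<lambda>t. - t / (real n - t)"
  have "finite {t. real k \<le> t \<and> t < real n \<and> phi t = 0}"
    using finite_phi_roots by (rule rev_finite_subset) auto
  then have "card T = (k - 1) + card {t. real k \<le> t \<and> t < real n \<and> phi t = 0}"
    unfolding T_def by (subst card_Un_disjoint) (auto simp: card_image)
  moreover have T: "0 < t \<and> t < real n \<and> phi t = 0" if "t \<in> T" for t
    using that phi_below_order_0 phi_order_0 order_0_P_le unfolding T_def k_def
    by (auto simp: order_le_less)
  have "card T = card (?b ` T)"
    using inj_on_subset[OF inj_on_neg_ratio[of "real n"]] n_pos T by (intro card_image[symmetric]) auto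
  also have "\<dots> \<le> card {x. x < 0 \<and> complex_of_real x \<in> set as}"
  proof (rule card_mono)
    show "finite {x. x < 0 \<and> complex_of_real x \<in> set as}"
      by (rule finite_subset[of _ "Re ` set as"]) force+
    show "?b ` T \<subseteq> {x. x < 0 \<and> complex_of_real x \<in> set as}"
      using T phi_root by (auto simp: divide_neg_pos)
  qed
  ultimately show ?thesis using pos_roots_P_le unfolding k_def by simp
qed

lemma neg_roots_P_ge:
  "length (filter (\<lambda>z. \<exists>x>0. z = complex_of_real x) as) + length (filter (\<lambda>z. z = 0) as) + (n - length as)
     \<le> neg_roots P + (if 0 \<in> set as then 1 else 0)"
proof -
  define good where "good z \<longleftrightarrow> z = 0 \<or> (\<exists>x>0. z = complex_of_real x)" for z
  define G where "G = map Re (filter good as)"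
  define B where "B = filter (\<lambda>z. \<not> good z) as"
  define R where "R = map_poly Re (K_ops n B ([:1, 1:] ^ n))"
  have G: "filter good as = map complex_of_real G"
    unfolding G_def by (induction as) (auto simp: good_def)
  have "map_poly complex_of_real P = K_ops n (filter good as) (K_ops n B ([:1, 1:] ^ n))"
    unfolding rep schur_szego_K_eq_K_ops[OF n_pos] B_def by (rule K_ops_filter_split)
  then have "map_poly Re (map_poly complex_of_real P) = K_ops n G R"
    unfolding G R_def by (simp only: map_poly_Re_K_ops)
  then have P: "P = K_ops n G R" by (simp add: map_poly_map_poly o_def)
  have "K_ops n G 0 = 0" by (rule poly_eqI) (simp add: coeff_K_ops)
  then have "R \<noteq> 0" using P P_nonzero by auto
  have "degree R \<le> n"
    unfolding R_def by (rule degree_le) (simp add: coeff_map_poly coeff_K_ops coeff_x_plus_1_power)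
  have "[:1, 1:] ^ (n - length B) dvd K_ops n B ([:1, 1:] ^ n :: complex poly)"
    using power_lin_dvd_K_ops[where c = "-1" and e = n and p = "[:1, 1:] ^ n" and as = B] by simp
  then have "[:1, 1:] ^ (n - length B) dvd R"
    unfolding R_def by (intro dvd_map_poly_Re) (simp add: map_poly_of_real_x_plus_1_power)
  then have "n - length B \<le> order (-1) R"
    using order_divides[of "-1" "n - length B" R] \<open>R \<noteq> 0\<close> by simp
  also have "\<dots> \<le> neg_roots R"
    using sum_order_le_neg_roots[OF \<open>R \<noteq> 0\<close>, of "{-1}"] by simp
  also have "\<dots> \<le> neg_roots P + (if 0 \<in> set G \<and> poly R 0 \<noteq> 0 then 1 else 0)"
    unfolding P using n_pos \<open>degree R \<le> n\<close> by (intro neg_roots_K_ops) (auto simp: G_def good_def)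
  also have "\<dots> \<le> neg_roots P + (if 0 \<in> set as then 1 else 0)"
    by (auto simp: G_def good_def)
  finally have "n - length B \<le> neg_roots P + (if 0 \<in> set as then 1 else 0)" .
  moreover have "length (filter good as) + length B = length as"
    unfolding B_def by (rule sum_length_filter_compl)
  moreover have "length (filter good as) =
      length (filter (\<lambda>z. z = 0) as) + length (filter (\<lambda>z. \<exists>x>0. z = complex_of_real x) as)"
    unfolding good_def by (rule length_filter_disj) auto
  ultimately show ?thesis using length_as by linarith
qed

end

theorem proposition1p2:
  fixes n :: nat and P Q :: "real poly" and as :: "complex list"
  assumes n2: "n \<ge> 2"
    and PQ: "P = [:1, 1:] * Q" and degQ: "degree Q = n - 1" and monQ: "lead_coeff Q = 1"
    and len: "length as = n - 1"
    and rep: "map_poly complex_of_real P = schur_szego_K n as"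
  shows
    "(\<forall>m k. m = (\<Sum>r\<in>{r::real. r > 0 \<and> poly P r = 0}. order r P) \<and> k = order 0 P \<longrightarrow>
        m + (k - 1) \<le> card {x::real. x < 0 \<and> complex_of_real x \<in> set as}
      \<and> (\<forall>j\<in>{1..<k}. complex_of_real (- real j / (real n - real j)) \<in> set as)
      \<and> (k \<ge> 1 \<longrightarrow> 0 \<in> set as))
   \<and> (\<forall>q q1. q = length (filter (\<lambda>z. z = 0) as)
          \<and> q1 = length (filter (\<lambda>z. \<exists>x::real. x > 0 \<and> z = complex_of_real x) as) \<longrightarrow>
        q1 + (q - 1) \<le> (\<Sum>r\<in>{r::real. r < 0 \<and> poly P r = 0}. order r P)
      \<and> (q \<ge> 1 \<longrightarrow> poly P 0 = 0))"
proof -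
  interpret real_schur_szego_K n P as
    using n2 len rep by unfold_locales simp_all
  have zero_in_as: "0 \<in> set as \<longleftrightarrow> 1 \<le> length (filter (\<lambda>z. z = 0) as)"
    by (auto simp: Suc_le_eq length_pos_if_in_set filter_empty_conv)
  have "0 \<in> set as" if "order 0 P \<ge> 1"
    using that poly_P_0_eq_0_iff P_nonzero by (simp add: order_root)
  moreover have "length (filter (\<lambda>z. \<exists>x>0. z = complex_of_real x) as) + length (filter (\<lambda>z. z = 0) as)
      \<le> neg_roots P"
    using neg_roots_P_ge len n2 by (simp split: if_split_asm)
  ultimately show ?thesis
    using pos_roots_P_add_le neg_ratio_in_as_below_order zero_in_as poly_P_0_eq_0_iff
    unfolding pos_roots_def neg_roots_def by auto
qed

end
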